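(* Let $\sigma$ be a relational vocabulary, let $\mathscr{A}$ be a finite $\sigma$-structure with universe $A$, and let $k>0$. There is a bijective correspondence between (1) $\mathbb{E}_k$-coalgebras $\alpha : \mathscr{A} \to \mathbb{E}_k \mathscr{A}$, and (2) forest covers of the Gaifman graph $\mathcal{G}(\mathscr{A})$ of height $\leq k$.
   Context: A relational vocabulary $\sigma$ is a set of relation symbols $R$, each with an arity $n>0$. A $\sigma$-structure $\mathscr{A}$ consists of a universe $A$ and relations $R^{\mathscr{A}} \subseteq A^n$ for each $R\in\sigma$ of arity $n$. A homomorphism $f:\mathscr{A}\to\mathscr{B}$ is a function $f:A\to B$ with $(a_1,\dots,a_n)\in R^{\mathscr{A}} \Rightarrow (f(a_1),\dots,f(a_n))\in R^{\mathscr{B}}$; these form the category $\mathcal{R}(\sigma)$. The Ehrenfeucht–Fraïssé comonad $\mathbb{E}_k$ on $\mathcal{R}(\sigma)$: the universe of $\mathbb{E}_k\mathscr{A}$ is $A^{\leq k}$, the set of non-empty sequences of elements of $A$ of length $\leq k$. For $R\in\sigma$ of arity $n$, $R^{\mathbb{E}_k\mathscr{A}}$ is the set of tuples $(s_1,\dots,s_n)$ of such sequences which are pairwise comparable in the prefix order $\sqsubseteq$ and satisfy $R^{\mathscr{A}}(\varepsilon_{\mathscr{A}}(s_1),\dots,\varepsilon_{\mathscr{A}}(s_n))$, where the counit $\varepsilon_{\mathscr{A}}:\mathbb{E}_k\mathscr{A}\to\mathscr{A}$ sends $[a_1,\dots,a_n]$ to $a_n$. On a homomorphism $h$, $\mathbb{E}_k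 h[a_1,\dots,a_j]=[h(a_1),\dots,h(a_j)]$; the comultiplication $\delta_{\mathscr{A}}:\mathbb{E}_k\mathscr{A}\to\mathbb{E}_k\mathbb{E}_k\mathscr{A}$ sends $[a_1,\dots,a_j]$ to $[[a_1],[a_1,a_2],\dots,[a_1,\dots,a_j]]$. An $\mathbb{E}_k$-coalgebra on $\mathscr{A}$ is a homomorphism $\alpha:\mathscr{A}\to\mathbb{E}_k\mathscr{A}$ with $\delta_{\mathscr{A}}\circ\alpha=\mathbb{E}_k\alpha\circ\alpha$ and $\varepsilon_{\mathscr{A}}\circ\alpha=\mathrm{id}_{\mathscr{A}}$. The Gaifman graph $\mathcal{G}(\mathscr{A})=(A,\frown)$ has $a\frown a'$ iff for some $R\in\sigma$ and some $(a_1,\dots,a_n)\in R^{\mathscr{A}}$, $a=a_i$, $a'=a_j$ with $i\neq j$. In a poset, $x\uparrow y$ means $x\leq y$ or $y\leq x$; a chain is a subset whose elements are pairwise comparable. A forest is a poset $(F,\leq)$ in which the set of predecessors of every element is a finite chain; its height is $\sup_C|C|$ over chains $C$. A forest cover of a graph $G=(V,\frown)$ is a forest $(F,\leq)$ with $V\subseteq F$ such that $v\frown v'$ implies $v\uparrow v'$. *)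

theory Defs
  imports Main "HOL-Library.Sublist" "HOL-Library.FuncSet"
begin

text \<open>A relational vocabulary is a set of symbols sig with an arity function ar.
A structure consists of a universe A and an interpretation rel R (a set of tuples,
represented as lists of length ar R).\<close>

definition is_structure :: "'r set \<Rightarrow> ('r \<Rightarrow> nat) \<Rightarrow> 'a set \<Rightarrow> ('r \<Rightarrow> 'a list set) \<Rightarrow> bool" where
  "is_structure sig ar A rel \<longleftrightarrow>
     (\<forall>R\<in>sig. 0 < ar R \<and> rel R \<subseteq> {t. length t = ar R \<and> set t \<subseteq> A})"

definition is_hom :: "'r set \<Rightarrow> 'a set \<Rightarrow> ('r \<Rightarrow> 'a list set) \<Rightarrow> 'b set \<Rightarrow> ('r \<Rightarrow> 'b list set)
                       \<Rightarrow> ('a \<Rightarrow> 'b) \<Rightarrow> bool" where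
  "is_hom sig A relA B relB f \<longleftrightarrow>
     (\<forall>a\<in>A. f a \<in> B) \<and> (\<forall>R\<in>sig. \<forall>t\<in>relA R. map f t \<in> relB R)"

definition Ek_univ :: "nat \<Rightarrow> 'a set \<Rightarrow> 'a list set" where
  "Ek_univ k A = {s. s \<noteq> [] \<and> length s \<le> k \<and> set s \<subseteq> A}"

definition Ek_counit :: "'a list \<Rightarrow> 'a" where
  "Ek_counit s = last s"

definition Ek_rel :: "nat \<Rightarrow> 'a set \<Rightarrow> ('r \<Rightarrow> 'a list set) \<Rightarrow> 'r \<Rightarrow> 'a list list set" where
  "Ek_rel k A rel R = {ts. set ts \<subseteq> Ek_univ k A \<and>
      (\<forall>i<length ts. \<forall>j<length ts. prefix (ts!i) (ts!j) \<or> prefix (ts!j) (ts!i)) \<and>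
      map Ek_counit ts \<in> rel R}"

definition Ek_map :: "('a \<Rightarrow> 'b) \<Rightarrow> 'a list \<Rightarrow> 'b list" where
  "Ek_map h s = map h s"

definition Ek_delta :: "'a list \<Rightarrow> 'a list list" where
  "Ek_delta s = map (\<lambda>i. take i s) [1..<Suc (length s)]"

text \<open>E_k-coalgebra on the structure (A, rel). As a function on A we take it
extensional (undefined outside A), so that coalgebras are determined by their values on A.\<close>
definition Ek_coalgebra :: "'r set \<Rightarrow> nat \<Rightarrow> 'a set \<Rightarrow> ('r \<Rightarrow> 'a list set) \<Rightarrow> ('a \<Rightarrow> 'a list) \<Rightarrow> bool" where
  "Ek_coalgebra sig k A rel \<alpha> \<longleftrightarrow>
     \<alpha> \<in> extensional A \<and>
     is_hom sig A rel (Ek_univ k A) (Ek_rel k A rel) \<alpha> \<and>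
     (\<forall>a\<in>A. Ek_delta (\<alpha> a) = Ek_map \<alpha> (\<alpha> a)) \<and>
     (\<forall>a\<in>A. Ek_counit (\<alpha> a) = a)"

definition gaifman_adj :: "'r set \<Rightarrow> ('r \<Rightarrow> 'a list set) \<Rightarrow> 'a \<Rightarrow> 'a \<Rightarrow> bool" where
  "gaifman_adj sig rel a a' \<longleftrightarrow>
     (\<exists>R\<in>sig. \<exists>t\<in>rel R. \<exists>i<length t. \<exists>j<length t. i \<noteq> j \<and> t!i = a \<and> t!j = a')"

definition is_chain :: "('a \<times> 'a) set \<Rightarrow> 'a set \<Rightarrow> bool" where
  "is_chain le C \<longleftrightarrow> (\<forall>x\<in>C. \<forall>y\<in>C. (x,y) \<in> le \<or> (y,x) \<in> le)"

definition is_forest :: "'a set \<Rightarrow> ('a \<times> 'a) set \<Rightarrow> bool" where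
  "is_forest F le \<longleftrightarrow> le \<subseteq> F \<times> F \<and> partial_order_on F le \<and>
     (\<forall>x\<in>F. finite {y. (y,x) \<in> le} \<and> is_chain le {y. (y,x) \<in> le})"

definition height_le :: "'a set \<Rightarrow> ('a \<times> 'a) set \<Rightarrow> nat \<Rightarrow> bool" where
  "height_le F le k \<longleftrightarrow> (\<forall>C\<subseteq>F. is_chain le C \<longrightarrow> finite C \<and> card C \<le> k)"

definition gaifman_forest_cover :: "'r set \<Rightarrow> 'a set \<Rightarrow> ('r \<Rightarrow> 'a list set) \<Rightarrow> ('a \<times> 'a) set \<Rightarrow> bool" where
  "gaifman_forest_cover sig A rel le \<longleftrightarrow> is_forest A le \<and>
     (\<forall>a\<in>A. \<forall>a'\<in>A. gaifman_adj sig rel a a' \<longrightarrow> (a,a') \<in> le \<or> (a',a) \<in> le)"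

end

theory Submission
  imports Defs
begin

text \<open>The comultiplication law says that the i-th entry of \<alpha> a is sent by \<alpha> to the prefix of
\<alpha> a of length i + 1, and the counit law says that \<alpha> a ends in a. Hence the prefix order on
the sequences \<alpha> a is a forest order on A in which \<alpha> a lists the predecessors of a from the
root down; the homomorphism condition makes Gaifman-adjacent elements comparable, and
length (\<alpha> a) \<le> k bounds the height. Conversely, a forest cover of height at most k gives the
coalgebra sending a to the list of its predecessors in increasing order. The two constructions
are mutually inverse because such a sorted list is unique.\<close>

lemma sorted_wrt_set_unique:
  assumes asym: "\<And>x y. r x y \<Longrightarrow> \<not> r y x"
    and "sorted_wrt r xs" "sorted_wrt r ys" "set xs = set ys"
  shows "xs = ys"
  using assms(2-)
proof (induction xs arbitrary: ys)
  case Nil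
  then show ?case by simp
next
  case (Cons x xs)
  then obtain y ys' where ys: "ys = y # ys'" by (cases ys) auto
  have "x = y"
  proof (rule ccontr)
    assume "x \<noteq> y"
    then have "y \<in> set xs" "x \<in> set ys'" using Cons.prems(3) ys by auto
    then show False using Cons.prems(1,2) ys asym by auto
  qed
  moreover have "x \<notin> set xs" "y \<notin> set ys'" using Cons.prems(1,2) ys asym by auto
  ultimately have "set xs = set ys'" using Cons.prems(3) ys by auto
  then show ?case using Cons ys \<open>x = y\<close> by simp
qed

lemma ex_sorted_wrt_list_of_set:
  fixes rank :: "'a \<Rightarrow> 'b::linorder"
  assumes "finite S"
    and total: "\<And>x y. x \<in> S \<Longrightarrow> y \<in> S \<Longrightarrow> x \<noteq> y \<Longrightarrow> r x y \<or> r y x"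
    and rank: "\<And>x y. x \<in> S \<Longrightarrow> y \<in> S \<Longrightarrow> r x y \<Longrightarrow> rank x < rank y"
  shows "\<exists>xs. set xs = S \<and> sorted_wrt r xs"
proof -
  obtain xs0 where xs0: "set xs0 = S" "distinct xs0"
    using finite_distinct_list[OF \<open>finite S\<close>] by blast
  define xs where "xs = sort_key rank xs0"
  have set_xs: "set xs = S" and distinct: "distinct xs"
    using xs0 by (simp_all add: xs_def)
  have sorted: "sorted (map rank xs)"
    unfolding xs_def by (rule sorted_sort_key)
  have "r (xs ! i) (xs ! j)" if "i < j" "j < length xs" for i j
  proof -
    have "rank (xs ! i) \<le> rank (xs ! j)"
      using sorted that by (simp add: sorted_iff_nth_mono)
    moreover have "xs ! i \<noteq> xs ! j"
      using distinct that by (simp add: nth_eq_iff_index_eq)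
    moreover have "xs ! i \<in> S" "xs ! j \<in> S"
      using set_xs that by auto
    ultimately show ?thesis
      using total rank by (meson leD)
  qed
  then show ?thesis
    using set_xs by (auto simp: sorted_wrt_iff_nth_less)
qed

lemma sorted_wrt_irrefl_distinct: "(\<And>x. \<not> r x x) \<Longrightarrow> sorted_wrt r xs \<Longrightarrow> distinct xs"
  by (induction xs) auto

lemma prefix_take_take: "i \<le> j \<Longrightarrow> prefix (take i xs) (take j xs)"
  by (metis min.absorb1 take_is_prefix take_take)

definition coalgebra_order :: "'a set \<Rightarrow> ('a \<Rightarrow> 'a list) \<Rightarrow> ('a \<times> 'a) set" where
  "coalgebra_order A \<alpha> = {(x, y). x \<in> A \<and> y \<in> A \<and> prefix (\<alpha> x) (\<alpha> y)}"

locale Ek_coalg =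
  fixes sig :: "'r set" and k :: nat and A :: "'a set" and rel :: "'r \<Rightarrow> 'a list set"
    and \<alpha> :: "'a \<Rightarrow> 'a list"
  assumes coalgebra: "Ek_coalgebra sig k A rel \<alpha>"
begin

lemma coalg_in_univ:
  assumes "a \<in> A" shows "\<alpha> a \<noteq> []" "length (\<alpha> a) \<le> k" "set (\<alpha> a) \<subseteq> A"
  using coalgebra assms unfolding Ek_coalgebra_def is_hom_def Ek_univ_def by blast+

lemma last_coalg: "a \<in> A \<Longrightarrow> last (\<alpha> a) = a"
  using coalgebra unfolding Ek_coalgebra_def Ek_counit_def by blast

lemma coalg_inj: "inj_on \<alpha> A"
  by (metis inj_onI last_coalg)

lemma coalg_nth:
  assumes "a \<in> A" "i < length (\<alpha> a)"
  shows "\<alpha> (\<alpha> a ! i) = take (Suc i) (\<alpha> a)"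
proof -
  have "Ek_delta (\<alpha> a) = map \<alpha> (\<alpha> a)"
    using coalgebra assms(1) unfolding Ek_coalgebra_def Ek_map_def by blast
  then have "Ek_delta (\<alpha> a) ! i = \<alpha> (\<alpha> a ! i)"
    using assms(2) by simp
  then show ?thesis
    using assms(2) unfolding Ek_delta_def by (simp del: upt_Suc)
qed

lemma set_coalg_iff:
  assumes "y \<in> A"
  shows "x \<in> set (\<alpha> y) \<longleftrightarrow> x \<in> A \<and> prefix (\<alpha> x) (\<alpha> y)"
proof
  assume "x \<in> set (\<alpha> y)"
  then obtain i where "i < length (\<alpha> y)" "x = \<alpha> y ! i"
    by (auto simp: in_set_conv_nth)
  then show "x \<in> A \<and> prefix (\<alpha> x) (\<alpha> y)"
    using coalg_nth[OF assms] coalg_in_univ[OF assms] by (auto simp: take_is_prefix)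
next
  assume "x \<in> A \<and> prefix (\<alpha> x) (\<alpha> y)"
  then show "x \<in> set (\<alpha> y)"
    by (metis coalg_in_univ(1) last_coalg last_in_set set_mono_prefix subsetD)
qed

lemma predecessors_coalgebra_order:
  "x \<in> A \<Longrightarrow> {y. (y, x) \<in> coalgebra_order A \<alpha>} = set (\<alpha> x)"
  using set_coalg_iff unfolding coalgebra_order_def by blast

lemma coalg_comparable:
  assumes "a \<in> A" "x \<in> set (\<alpha> a)" "y \<in> set (\<alpha> a)"
  shows "prefix (\<alpha> x) (\<alpha> y) \<or> prefix (\<alpha> y) (\<alpha> x)"
proof -
  obtain i j where "i < length (\<alpha> a)" "x = \<alpha> a ! i" "j < length (\<alpha> a)" "y = \<alpha> a ! j"
    using assms(2,3) by (auto simp: in_set_conv_nth)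
  then show ?thesis
    using coalg_nth[OF assms(1)] by (metis nat_le_linear prefix_take_take Suc_le_mono)
qed

lemma is_forest_coalgebra_order: "is_forest A (coalgebra_order A \<alpha>)"
proof -
  have "partial_order_on A (coalgebra_order A \<alpha>)"
    unfolding partial_order_on_def preorder_on_def refl_on_def trans_def antisym_def
      coalgebra_order_def
    using coalg_inj by (auto intro: prefix_order.trans dest: prefix_order.antisym inj_onD)
  moreover have "is_chain (coalgebra_order A \<alpha>) (set (\<alpha> x))" if "x \<in> A" for x
    using coalg_comparable[OF that] coalg_in_univ(3)[OF that]
    unfolding is_chain_def coalgebra_order_def by blast
  ultimately show ?thesis
    unfolding is_forest_def using predecessors_coalgebra_order
    by (simp add: coalgebra_order_def subset_iff)
qed

lemma gaifman_forest_cover_coalgebra_order: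
  "gaifman_forest_cover sig A rel (coalgebra_order A \<alpha>)"
  unfolding gaifman_forest_cover_def
proof (intro conjI is_forest_coalgebra_order ballI impI)
  fix a a' assume "a \<in> A" "a' \<in> A" "gaifman_adj sig rel a a'"
  then obtain R t i j where
    R: "R \<in> sig" "t \<in> rel R" "i < length t" "j < length t" "t ! i = a" "t ! j = a'"
    unfolding gaifman_adj_def by blast
  have "map \<alpha> t \<in> Ek_rel k A rel R"
    using coalgebra R(1,2) unfolding Ek_coalgebra_def is_hom_def by blast
  then have "prefix (\<alpha> a) (\<alpha> a') \<or> prefix (\<alpha> a') (\<alpha> a)"
    using R(3-) unfolding Ek_rel_def by auto
  then show "(a, a') \<in> coalgebra_order A \<alpha> \<or> (a', a) \<in> coalgebra_order A \<alpha>"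
    using \<open>a \<in> A\<close> \<open>a' \<in> A\<close> unfolding coalgebra_order_def by blast
qed

lemma height_le_coalgebra_order: "height_le A (coalgebra_order A \<alpha>) k"
  unfolding height_le_def
proof (intro allI impI)
  fix C assume "C \<subseteq> A" and chain: "is_chain (coalgebra_order A \<alpha>) C"
  have "inj_on (\<lambda>x. length (\<alpha> x)) C"
  proof (rule inj_onI)
    fix x y assume "x \<in> C" "y \<in> C" "length (\<alpha> x) = length (\<alpha> y)"
    moreover have "prefix (\<alpha> x) (\<alpha> y) \<or> prefix (\<alpha> y) (\<alpha> x)"
      using chain \<open>x \<in> C\<close> \<open>y \<in> C\<close> unfolding is_chain_def coalgebra_order_def by blast
    ultimately show "x = y"
      using coalg_inj \<open>C \<subseteq> A\<close>
      by (metis inj_onD prefix_order.eq_iff prefix_length_prefix order_refl subsetD)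
  qed
  moreover have "(\<lambda>x. length (\<alpha> x)) ` C \<subseteq> {1..k}"
    using coalg_in_univ \<open>C \<subseteq> A\<close> by (force simp: Suc_le_eq)
  ultimately show "finite C \<and> card C \<le> k"
    using inj_on_finite[of _ C "{1..k}"] card_inj_on_le[of _ C "{1..k}"] by simp
qed

lemma coalg_sorted:
  assumes "a \<in> A"
  shows "sorted_wrt (\<lambda>x y. (x, y) \<in> coalgebra_order A \<alpha> - Id) (\<alpha> a)"
  unfolding sorted_wrt_iff_nth_less
proof (intro allI impI)
  fix i j assume "i < j" "j < length (\<alpha> a)"
  then have "prefix (\<alpha> (\<alpha> a ! i)) (\<alpha> (\<alpha> a ! j))"
    and "length (\<alpha> (\<alpha> a ! i)) \<noteq> length (\<alpha> (\<alpha> a ! j))"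
    using coalg_nth[OF assms] prefix_take_take[of "Suc i" "Suc j"] by simp_all
  moreover have "\<alpha> a ! i \<in> A" "\<alpha> a ! j \<in> A"
    using coalg_in_univ(3)[OF assms] \<open>i < j\<close> \<open>j < length (\<alpha> a)\<close> by auto
  ultimately show "(\<alpha> a ! i, \<alpha> a ! j) \<in> coalgebra_order A \<alpha> - Id"
    unfolding coalgebra_order_def by auto
qed

end

definition ancestor_list :: "'a set \<Rightarrow> ('a \<times> 'a) set \<Rightarrow> 'a \<Rightarrow> 'a list" where
  "ancestor_list A le = restrict
     (\<lambda>a. SOME xs. set xs = {y. (y, a) \<in> le} \<and> sorted_wrt (\<lambda>x y. (x, y) \<in> le - Id) xs) A"

locale forest =
  fixes A :: "'a set" and le :: "('a \<times> 'a) set"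
  assumes forest: "is_forest A le"
begin

lemma forest_carrier: "(x, y) \<in> le \<Longrightarrow> x \<in> A \<and> y \<in> A"
  and forest_refl: "x \<in> A \<Longrightarrow> (x, x) \<in> le"
  and forest_trans: "(x, y) \<in> le \<Longrightarrow> (y, z) \<in> le \<Longrightarrow> (x, z) \<in> le"
  and forest_antisym: "(x, y) \<in> le \<Longrightarrow> (y, x) \<in> le \<Longrightarrow> x = y"
  and finite_predecessors: "x \<in> A \<Longrightarrow> finite {y. (y, x) \<in> le}"
  and chain_predecessors: "x \<in> A \<Longrightarrow> is_chain le {y. (y, x) \<in> le}"
  using forest
  unfolding is_forest_def partial_order_on_def preorder_on_def refl_on_def trans_def antisym_def
  by blast+

abbreviation ancestors :: "'a \<Rightarrow> 'a list" where
  "ancestors \<equiv> ancestor_list A le"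

lemma ex_sorted_predecessors:
  assumes "a \<in> A"
  shows "\<exists>xs. set xs = {y. (y, a) \<in> le} \<and> sorted_wrt (\<lambda>x y. (x, y) \<in> le - Id) xs"
proof (rule ex_sorted_wrt_list_of_set[where rank = "\<lambda>x. card {z. (z, x) \<in> le}"])
  show "finite {y. (y, a) \<in> le}"
    using finite_predecessors[OF assms] .
next
  fix x y assume "x \<in> {y. (y, a) \<in> le}" "y \<in> {y. (y, a) \<in> le}" "x \<noteq> y"
  then show "(x, y) \<in> le - Id \<or> (y, x) \<in> le - Id"
    using chain_predecessors[OF assms] unfolding is_chain_def by blast
next
  fix x y assume xy: "(x, y) \<in> le - Id"
  then have "{z. (z, x) \<in> le} \<subseteq> {z. (z, y) \<in> le}"
    using forest_trans by blast
  moreover have "y \<in> {z. (z, y) \<in> le} - {z. (z, x) \<in> le}"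
    using xy forest_carrier forest_refl forest_antisym by blast
  ultimately have "{z. (z, x) \<in> le} \<subset> {z. (z, y) \<in> le}"
    by blast
  moreover have "finite {z. (z, y) \<in> le}"
    using xy forest_carrier finite_predecessors by blast
  ultimately show "card {z. (z, x) \<in> le} < card {z. (z, y) \<in> le}"
    by (rule psubset_card_mono[rotated])
qed

lemma set_ancestors: "a \<in> A \<Longrightarrow> set (ancestors a) = {y. (y, a) \<in> le}"
  and sorted_ancestors: "a \<in> A \<Longrightarrow> sorted_wrt (\<lambda>x y. (x, y) \<in> le - Id) (ancestors a)"
  using someI_ex[OF ex_sorted_predecessors] unfolding ancestor_list_def by simp_all

lemma ancestors_unique:
  assumes "a \<in> A" "set xs = {y. (y, a) \<in> le}" "sorted_wrt (\<lambda>x y. (x, y) \<in> le - Id) xs"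
  shows "ancestors a = xs"
proof (rule sorted_wrt_set_unique)
  show "\<And>x y. (x, y) \<in> le - Id \<Longrightarrow> (y, x) \<notin> le - Id"
    using forest_antisym by blast
qed (use set_ancestors[OF assms(1)] sorted_ancestors[OF assms(1)] assms(2,3) in simp_all)

lemma set_take_ancestors:
  assumes a: "a \<in> A" and i: "i < length (ancestors a)"
  shows "set (take (Suc i) (ancestors a)) = {y. (y, ancestors a ! i) \<in> le}"
proof -
  let ?xs = "ancestors a"
  have below_a: "(?xs ! i, a) \<in> le"
    using set_ancestors[OF a] i nth_mem by blast
  have sorted: "(?xs ! j, ?xs ! j') \<in> le - Id" if "j < j'" "j' < length ?xs" for j j'
    using sorted_ancestors[OF a] that by (simp add: sorted_wrt_iff_nth_less)
  have below_i: "(?xs ! j, ?xs ! i) \<in> le \<longleftrightarrow> j \<le> i" if "j < length ?xs" for j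
  proof (cases "j < i")
    case True
    then show ?thesis using sorted[of j i] i by simp
  next
    case False
    then consider "j = i" | "i < j" by linarith
    then show ?thesis
    proof cases
      case 1
      then show ?thesis using below_a forest_carrier forest_refl by simp
    next
      case 2
      then show ?thesis using sorted[of i j] that forest_antisym by auto
    qed
  qed
  show ?thesis
  proof (intro set_eqI iffI)
    fix y assume "y \<in> set (take (Suc i) ?xs)"
    then obtain j where "j \<le> i" "y = ?xs ! j"
      using i by (auto simp: in_set_conv_nth less_Suc_eq_le)
    then show "y \<in> {y. (y, ?xs ! i) \<in> le}"
      using below_i i by simp
  next
    fix y assume y: "y \<in> {y. (y, ?xs ! i) \<in> le}"
    then have "y \<in> set ?xs"
      using set_ancestors[OF a] below_a forest_trans by blast
    then obtain j where j: "j < length ?xs" "y = ?xs ! j"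
      by (auto simp: in_set_conv_nth)
    then have "j < length (take (Suc i) ?xs)" "take (Suc i) ?xs ! j = y"
      using below_i y by simp_all
    then show "y \<in> set (take (Suc i) ?xs)"
      by (metis nth_mem)
  qed
qed

lemma ancestors_nth:
  assumes "a \<in> A" "i < length (ancestors a)"
  shows "ancestors (ancestors a ! i) = take (Suc i) (ancestors a)"
proof (rule ancestors_unique)
  show "ancestors a ! i \<in> A"
    using set_ancestors[OF assms(1)] assms(2) forest_carrier nth_mem by blast
  show "set (take (Suc i) (ancestors a)) = {y. (y, ancestors a ! i) \<in> le}"
    using set_take_ancestors[OF assms] .
  show "sorted_wrt (\<lambda>x y. (x, y) \<in> le - Id) (take (Suc i) (ancestors a))"
    using sorted_ancestors[OF assms(1)] by (rule sorted_wrt_take)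
qed

lemma last_ancestors:
  assumes "a \<in> A" shows "ancestors a \<noteq> [] \<and> last (ancestors a) = a"
proof -
  have "a \<in> set (ancestors a)"
    using set_ancestors[OF assms] forest_refl[OF assms] by simp
  then obtain i where i: "i < length (ancestors a)" "ancestors a ! i = a"
    by (auto simp: in_set_conv_nth)
  then have "length (ancestors a) \<le> Suc i"
    using ancestors_nth[OF assms] by (metis take_all_iff)
  then have "length (ancestors a) = Suc i"
    using i(1) by simp
  then show ?thesis
    using i(2) by (metis diff_Suc_1 last_conv_nth list.size(3) nat.distinct(1))
qed

lemma prefix_ancestors_iff:
  assumes "x \<in> A" "y \<in> A"
  shows "prefix (ancestors x) (ancestors y) \<longleftrightarrow> (x, y) \<in> le"
proof
  assume "prefix (ancestors x) (ancestors y)"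
  then have "last (ancestors x) \<in> set (ancestors y)"
    using last_ancestors[OF assms(1)] by (meson last_in_set set_mono_prefix subsetD)
  then show "(x, y) \<in> le"
    using last_ancestors[OF assms(1)] set_ancestors[OF assms(2)] by simp
next
  assume "(x, y) \<in> le"
  then obtain i where "i < length (ancestors y)" "x = ancestors y ! i"
    using set_ancestors[OF assms(2)] by (metis in_set_conv_nth mem_Collect_eq)
  then show "prefix (ancestors x) (ancestors y)"
    using ancestors_nth[OF assms(2)] by (simp add: take_is_prefix)
qed

lemma coalgebra_order_ancestors: "coalgebra_order A ancestors = le"
  using prefix_ancestors_iff forest_carrier unfolding coalgebra_order_def by blast

lemma length_ancestors:
  assumes "a \<in> A" shows "length (ancestors a) = card {y. (y, a) \<in> le}"
proof -
  have "distinct (ancestors a)"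
    using sorted_ancestors[OF assms] by (rule sorted_wrt_irrefl_distinct[rotated]) simp
  then show ?thesis
    using distinct_card set_ancestors[OF assms] by metis
qed

end

lemma Ek_coalgebra_ancestor_list:
  assumes struct: "is_structure sig ar A rel"
    and cover: "gaifman_forest_cover sig A rel le" and height: "height_le A le k"
  shows "Ek_coalgebra sig k A rel (ancestor_list A le)"
proof -
  interpret forest A le
    using cover unfolding gaifman_forest_cover_def by unfold_locales blast
  have univ: "ancestors a \<in> Ek_univ k A" if "a \<in> A" for a
  proof -
    have "{y. (y, a) \<in> le} \<subseteq> A"
      using forest_carrier by blast
    then have "length (ancestors a) \<le> k"
      using height chain_predecessors[OF that] length_ancestors[OF that]
      unfolding height_le_def by simp
    moreover have "set (ancestors a) \<subseteq> A"
      using set_ancestors[OF that] forest_carrier by blast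
    ultimately show ?thesis
      using last_ancestors[OF that] unfolding Ek_univ_def by simp
  qed
  have hom: "map ancestors t \<in> Ek_rel k A rel R" if "R \<in> sig" "t \<in> rel R" for R t
  proof -
    have t: "set t \<subseteq> A"
      using struct that unfolding is_structure_def by blast
    have "prefix (ancestors (t ! i)) (ancestors (t ! j)) \<or>
          prefix (ancestors (t ! j)) (ancestors (t ! i))"
      if "i < length t" "j < length t" "i \<noteq> j" for i j
    proof -
      have "gaifman_adj sig rel (t ! i) (t ! j)"
        unfolding gaifman_adj_def using \<open>R \<in> sig\<close> \<open>t \<in> rel R\<close> that by blast
      moreover have "t ! i \<in> A" "t ! j \<in> A"
        using t that by auto
      ultimately show ?thesis
        using cover prefix_ancestors_iff unfolding gaifman_forest_cover_def by blast
    qed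
    moreover have "map Ek_counit (map ancestors t) = t"
      unfolding Ek_counit_def map_map by (rule map_idI) (use last_ancestors t in auto)
    ultimately show ?thesis
      using univ t \<open>t \<in> rel R\<close> unfolding Ek_rel_def by auto
  qed
  have delta: "Ek_delta (ancestors a) = Ek_map ancestors (ancestors a)" if "a \<in> A" for a
    unfolding Ek_delta_def Ek_map_def
    by (rule nth_equalityI) (auto simp: ancestors_nth[OF that] simp del: upt_Suc)
  show ?thesis
    unfolding Ek_coalgebra_def is_hom_def Ek_counit_def
    using univ hom delta last_ancestors by (auto simp: ancestor_list_def)
qed

lemma (in Ek_coalg) ancestor_list_coalgebra_order: "ancestor_list A (coalgebra_order A \<alpha>) = \<alpha>"
proof
  fix a
  interpret forest A "coalgebra_order A \<alpha>"
    using is_forest_coalgebra_order by unfold_locales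
  show "ancestors a = \<alpha> a"
  proof (cases "a \<in> A")
    case True
    then show ?thesis
      using ancestors_unique predecessors_coalgebra_order coalg_sorted by simp
  next
    case False
    then show ?thesis
      using coalgebra unfolding Ek_coalgebra_def ancestor_list_def by (simp add: extensional_def)
  qed
qed

theorem theorem4:
  fixes sig :: "'r set" and ar :: "'r \<Rightarrow> nat" and A :: "'a set"
    and rel :: "'r \<Rightarrow> 'a list set" and k :: nat
  assumes "is_structure sig ar A rel" and "finite A" and "0 < k"
  shows "\<exists>\<Phi>. bij_betw \<Phi> {\<alpha>. Ek_coalgebra sig k A rel \<alpha>}
                      {le. gaifman_forest_cover sig A rel le \<and> height_le A le k}"
proof (intro exI bij_betw_byWitness[where f' = "ancestor_list A"] ballI subsetI)
  fix \<alpha> assume "\<alpha> \<in> {\<alpha>. Ek_coalgebra sig k A rel \<alpha>}"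
  then interpret Ek_coalg sig k A rel \<alpha>
    by unfold_locales simp
  show "ancestor_list A (coalgebra_order A \<alpha>) = \<alpha>"
    by (rule ancestor_list_coalgebra_order)
next
  fix le assume "le \<in> {le. gaifman_forest_cover sig A rel le \<and> height_le A le k}"
  then interpret forest A le
    unfolding gaifman_forest_cover_def by unfold_locales simp
  show "coalgebra_order A (ancestor_list A le) = le"
    by (rule coalgebra_order_ancestors)
next
  fix le assume "le \<in> coalgebra_order A ` {\<alpha>. Ek_coalgebra sig k A rel \<alpha>}"
  then show "le \<in> {le. gaifman_forest_cover sig A rel le \<and> height_le A le k}"
    using Ek_coalg.gaifman_forest_cover_coalgebra_order Ek_coalg.height_le_coalgebra_order
    unfolding Ek_coalg_def by blast
next
  fix \<alpha> assume "\<alpha> \<in> ancestor_list A ` {le. gaifman_forest_cover sig A rel le \<and> height_le A le k}"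
  then show "\<alpha> \<in> {\<alpha>. Ek_coalgebra sig k A rel \<alpha>}"
    using Ek_coalgebra_ancestor_list[OF assms(1)] by blast
qed

end
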